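(* Let $A$ be a minimal $A_\infty$-algebra over a field supported in non-positive degrees, and let $P$ be a minimal $A_\infty$-module over $A$. Then the ascending degree filtration $P^{(l)}=\bigoplus_{k\le l}P^k$ is a filtration by $A_\infty$-submodules, and the subquotients, which are supported in a single degree, are determined up to $A_\infty$-equivalence by the corresponding representation of $A^0$.
   Context: An $A_\infty$-algebra is minimal if $\mu^1=0$; a module with structure maps $\mu^{1|d}:P\otimes A^{\otimes d}\to P$ of degree $1-d$ is minimal if $\mu^{1|0}=0$. $A^0$ is an ordinary associative algebra under $\mu^2$, and a subquotient concentrated in one degree is an ordinary $A^0$-module via $\mu^{1|1}$. *)

theory Defs
  imports Main "HOL.Vector_Spaces"
begin

text \<open>A graded vector space over a field is a family of subspaces
  G k (k :: int) of an ambient vector space (type 'v, scalar multiplication s)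
  which is independent; the graded space itself is the direct sum, i.e. the span
  of all G k. Multilinear maps on tensor powers are modelled as functions on lists
  that are linear in every slot. Signs follow the shifted (bar construction)
  convention: the Koszul sign of passing an operation of shifted degree 1 past an
  element x of degree k is (-1)^(k-1).\<close>

definition ksign :: "int \<Rightarrow> 'k::field" where
  "ksign n = (if even n then 1 else -1)"

definition graded_vs :: "('k::field \<Rightarrow> 'v::ab_group_add \<Rightarrow> 'v) \<Rightarrow> (int \<Rightarrow> 'v set) \<Rightarrow> bool" where
  "graded_vs s G \<longleftrightarrow> vector_space s \<and> (\<forall>k. module.subspace s (G k)) \<and>
     (\<forall>c. finite {k. c k \<noteq> 0} \<longrightarrow> (\<forall>k. c k \<in> G k) \<longrightarrow>
          (\<Sum>k\<in>{k. c k \<noteq> 0}. c k) = 0 \<longrightarrow> (\<forall>k. c k = 0))"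

definition gcarrier :: "('k::field \<Rightarrow> 'v::ab_group_add \<Rightarrow> 'v) \<Rightarrow> (int \<Rightarrow> 'v set) \<Rightarrow> 'v set" where
  "gcarrier s G = module.span s (\<Union>k. G k)"

definition degfilt :: "('k::field \<Rightarrow> 'v::ab_group_add \<Rightarrow> 'v) \<Rightarrow> (int \<Rightarrow> 'v set) \<Rightarrow> int \<Rightarrow> 'v set" where
  "degfilt s G l = module.span s (\<Union>k\<in>{..l}. G k)"

definition concentrated :: "(int \<Rightarrow> 'v::zero set) \<Rightarrow> int \<Rightarrow> bool" where
  "concentrated G l \<longleftrightarrow> (\<forall>k. k \<noteq> l \<longrightarrow> G k = {0})"

definition hom_list :: "(int \<Rightarrow> 'a set) \<Rightarrow> int list \<Rightarrow> 'a list \<Rightarrow> bool" where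
  "hom_list G ks xs \<longleftrightarrow> length ks = length xs \<and> (\<forall>i<length xs. xs ! i \<in> G (ks ! i))"

definition lin_on :: "('k \<Rightarrow> 'a::ab_group_add \<Rightarrow> 'a) \<Rightarrow> 'a set \<Rightarrow> ('k \<Rightarrow> 'b::ab_group_add \<Rightarrow> 'b) \<Rightarrow> ('a \<Rightarrow> 'b) \<Rightarrow> bool" where
  "lin_on sA C sB f \<longleftrightarrow> (\<forall>x\<in>C. \<forall>y\<in>C. \<forall>c. f (x + y) = f x + f y \<and> f (sA c x) = sB c (f x))"

definition multilin :: "('k \<Rightarrow> 'a::ab_group_add \<Rightarrow> 'a) \<Rightarrow> 'a set \<Rightarrow> ('k \<Rightarrow> 'b::ab_group_add \<Rightarrow> 'b) \<Rightarrow> ('a list \<Rightarrow> 'b) \<Rightarrow> bool" where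
  "multilin sA C sB f \<longleftrightarrow> (\<forall>ys ws. set ys \<subseteq> C \<longrightarrow> set ws \<subseteq> C \<longrightarrow> lin_on sA C sB (\<lambda>x. f (ys @ x # ws)))"

text \<open>Index set for the splittings xs = ys @ zs @ ws with zs nonempty (i = |ys|, j = |zs|).\<close>
definition splits :: "nat \<Rightarrow> (nat \<times> nat) set" where
  "splits n = {(i, j). 1 \<le> j \<and> i + j \<le> n}"

definition shsum :: "int list \<Rightarrow> int" where
  "shsum ks = sum_list (map (\<lambda>k. k - 1) ks)"

definition ainf_alg :: "('k::field \<Rightarrow> 'a::ab_group_add \<Rightarrow> 'a) \<Rightarrow> (int \<Rightarrow> 'a set) \<Rightarrow> ('a list \<Rightarrow> 'a) \<Rightarrow> bool" where
  "ainf_alg s G mu \<longleftrightarrow> graded_vs s G \<and> multilin s (gcarrier s G) s mu \<and>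
    (\<forall>ks xs. hom_list G ks xs \<longrightarrow> xs \<noteq> [] \<longrightarrow> mu xs \<in> G (sum_list ks + 2 - int (length xs))) \<and>
    (\<forall>ks xs. hom_list G ks xs \<longrightarrow>
       (\<Sum>(i, j)\<in>splits (length xs).
          s (ksign (shsum (take i ks))) (mu (take i xs @ mu (take j (drop i xs)) # drop (i + j) xs))) = 0)"

definition minimal_alg :: "('k::field \<Rightarrow> 'a::ab_group_add \<Rightarrow> 'a) \<Rightarrow> (int \<Rightarrow> 'a set) \<Rightarrow> ('a list \<Rightarrow> 'a) \<Rightarrow> bool" where
  "minimal_alg s G mu \<longleftrightarrow> (\<forall>a\<in>gcarrier s G. mu [a] = 0)"

text \<open>Right A-infinity module over (sA, GA, mu): operations m p [a1,...,ad] = mu^{1|d}(p, a1, ..., ad)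
  of degree 1 - d.\<close>
definition ainf_mod :: "('k::field \<Rightarrow> 'a::ab_group_add \<Rightarrow> 'a) \<Rightarrow> (int \<Rightarrow> 'a set) \<Rightarrow> ('a list \<Rightarrow> 'a) \<Rightarrow>
    ('k \<Rightarrow> 'p::ab_group_add \<Rightarrow> 'p) \<Rightarrow> (int \<Rightarrow> 'p set) \<Rightarrow> ('p \<Rightarrow> 'a list \<Rightarrow> 'p) \<Rightarrow> bool" where
  "ainf_mod sA GA mu sP GP m \<longleftrightarrow> ainf_alg sA GA mu \<and> graded_vs sP GP \<and>
    (\<forall>as. set as \<subseteq> gcarrier sA GA \<longrightarrow> lin_on sP (gcarrier sP GP) sP (\<lambda>p. m p as)) \<and>
    (\<forall>p\<in>gcarrier sP GP. multilin sA (gcarrier sA GA) sP (m p)) \<and>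
    (\<forall>k p ks as. p \<in> GP k \<longrightarrow> hom_list GA ks as \<longrightarrow>
        m p as \<in> GP (k + sum_list ks + 1 - int (length as))) \<and>
    (\<forall>k p ks as. p \<in> GP k \<longrightarrow> hom_list GA ks as \<longrightarrow>
        (\<Sum>i\<le>length as. m (m p (take i as)) (drop i as)) +
        (\<Sum>(i, j)\<in>splits (length as).
           sP (ksign ((k - 1) + shsum (take i ks))) (m p (take i as @ mu (take j (drop i as)) # drop (i + j) as))) = 0)"

definition minimal_mod :: "('k::field \<Rightarrow> 'p::ab_group_add \<Rightarrow> 'p) \<Rightarrow> (int \<Rightarrow> 'p set) \<Rightarrow> ('p \<Rightarrow> 'a list \<Rightarrow> 'p) \<Rightarrow> bool" where
  "minimal_mod sP GP m \<longleftrightarrow> (\<forall>p\<in>gcarrier sP GP. m p [] = 0)"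

definition ainf_submod :: "('k::field \<Rightarrow> 'a::ab_group_add \<Rightarrow> 'a) \<Rightarrow> (int \<Rightarrow> 'a set) \<Rightarrow>
    ('k \<Rightarrow> 'p::ab_group_add \<Rightarrow> 'p) \<Rightarrow> (int \<Rightarrow> 'p set) \<Rightarrow> ('p \<Rightarrow> 'a list \<Rightarrow> 'p) \<Rightarrow> 'p set \<Rightarrow> bool" where
  "ainf_submod sA GA sP GP m Q \<longleftrightarrow> Q \<subseteq> gcarrier sP GP \<and> module.subspace sP Q \<and>
     Q = module.span sP (\<Union>k. Q \<inter> GP k) \<and>
     (\<forall>p\<in>Q. \<forall>as. set as \<subseteq> gcarrier sA GA \<longrightarrow> m p as \<in> Q)"

text \<open>A-infinity module morphism f = (f^{1|d}), f p as of degree -length as.\<close>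
definition ainf_morph :: "('k::field \<Rightarrow> 'a::ab_group_add \<Rightarrow> 'a) \<Rightarrow> (int \<Rightarrow> 'a set) \<Rightarrow> ('a list \<Rightarrow> 'a) \<Rightarrow>
    ('k \<Rightarrow> 'p::ab_group_add \<Rightarrow> 'p) \<Rightarrow> (int \<Rightarrow> 'p set) \<Rightarrow> ('p \<Rightarrow> 'a list \<Rightarrow> 'p) \<Rightarrow>
    ('k \<Rightarrow> 'q::ab_group_add \<Rightarrow> 'q) \<Rightarrow> (int \<Rightarrow> 'q set) \<Rightarrow> ('q \<Rightarrow> 'a list \<Rightarrow> 'q) \<Rightarrow>
    ('p \<Rightarrow> 'a list \<Rightarrow> 'q) \<Rightarrow> bool" where
  "ainf_morph sA GA mu sP GP mP sQ GQ mQ f \<longleftrightarrow>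
    (\<forall>as. set as \<subseteq> gcarrier sA GA \<longrightarrow> lin_on sP (gcarrier sP GP) sQ (\<lambda>p. f p as)) \<and>
    (\<forall>p\<in>gcarrier sP GP. multilin sA (gcarrier sA GA) sQ (f p)) \<and>
    (\<forall>k p ks as. p \<in> GP k \<longrightarrow> hom_list GA ks as \<longrightarrow>
        f p as \<in> GQ (k + sum_list ks - int (length as))) \<and>
    (\<forall>k p ks as. p \<in> GP k \<longrightarrow> hom_list GA ks as \<longrightarrow>
        (\<Sum>i\<le>length as. mQ (f p (take i as)) (drop i as)) =
        (\<Sum>i\<le>length as. f (mP p (take i as)) (drop i as)) +
        (\<Sum>(i, j)\<in>splits (length as).
           sQ (ksign ((k - 1) + shsum (take i ks))) (f p (take i as @ mu (take j (drop i as)) # drop (i + j) as))))"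

text \<open>f^{1|0} induces an isomorphism on cohomology with respect to mu^{1|0}.\<close>
definition quasi_iso :: "(int \<Rightarrow> 'p::ab_group_add set) \<Rightarrow> ('p \<Rightarrow> 'a list \<Rightarrow> 'p) \<Rightarrow>
    (int \<Rightarrow> 'q::ab_group_add set) \<Rightarrow> ('q \<Rightarrow> 'a list \<Rightarrow> 'q) \<Rightarrow> ('p \<Rightarrow> 'a list \<Rightarrow> 'q) \<Rightarrow> bool" where
  "quasi_iso GP mP GQ mQ f \<longleftrightarrow>
    (\<forall>k. \<forall>p\<in>GP k. mP p [] = 0 \<longrightarrow> (\<exists>q\<in>GQ (k - 1). f p [] = mQ q []) \<longrightarrow>
           (\<exists>p'\<in>GP (k - 1). p = mP p' [])) \<and>
    (\<forall>k. \<forall>q\<in>GQ k. mQ q [] = 0 \<longrightarrow>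
           (\<exists>p\<in>GP k. mP p [] = 0 \<and> (\<exists>q'\<in>GQ (k - 1). q = f p [] + mQ q' [])))"

definition ainf_equivalent where
  "ainf_equivalent sA GA mu sP GP mP sQ GQ mQ \<longleftrightarrow>
     (\<exists>f. ainf_morph sA GA mu sP GP mP sQ GQ mQ f \<and> quasi_iso GP mP GQ mQ f)"

text \<open>(sQ, GQ, mQ) together with pi is (a realisation of) the subquotient
  module P^(l) / P^(l-1): pi is a degree preserving linear surjection
  P^(l) \<rightarrow> Q with kernel P^(l-1) intertwining the structure maps.\<close>
definition is_subquotient where
  "is_subquotient sA GA sP GP mP l sQ GQ mQ pi \<longleftrightarrow>
     lin_on sP (degfilt sP GP l) sQ pi \<and>
     pi ` degfilt sP GP l = gcarrier sQ GQ \<and>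
     (\<forall>x\<in>degfilt sP GP l. pi x = 0 \<longleftrightarrow> x \<in> degfilt sP GP (l - 1)) \<and>
     (\<forall>k. pi ` (GP k \<inter> degfilt sP GP l) = GQ k) \<and>
     (\<forall>p\<in>degfilt sP GP l. \<forall>as. set as \<subseteq> gcarrier sA GA \<longrightarrow> pi (mP p as) = mQ (pi p) as)"

end

theory Submission
  imports Defs
begin

text \<open>Since A lives in degrees \<le> 0, the operation mu^{1|d}(p, a_1, ..., a_d) with d \<ge> 1 and
  homogeneous arguments has degree deg p + \<Sum> deg a_i + 1 - d \<le> deg p, while mu^{1|0} = 0;
  multilinearity extends this to arbitrary arguments, so every P^(l) is a submodule, and the
  subquotient P^(l) / P^(l-1) only sees degree l. In a module concentrated in a single degree the
  same degree count kills every structure map except mu^{1|1}(q, a) with a in A^0. Hence a linear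
  bijection intertwining these A^0-actions, extended by zero higher components, is a strict
  A-infinity morphism, and as both differentials vanish it is a quasi-isomorphism.\<close>

lemma graded_vs_module: "graded_vs s G \<Longrightarrow> module s"
  by (simp add: graded_vs_def module_iff_vector_space)

lemma graded_vs_subspace: "graded_vs s G \<Longrightarrow> module.subspace s (G k)"
  by (simp add: graded_vs_def)

lemma graded_vs_zero: "graded_vs s G \<Longrightarrow> 0 \<in> G k"
  using module.subspace_0[OF graded_vs_module graded_vs_subspace] .

lemma subspace_gcarrier: "graded_vs s G \<Longrightarrow> module.subspace s (gcarrier s G)"
  unfolding gcarrier_def using module.subspace_span[OF graded_vs_module] .

lemma graded_vs_subset_gcarrier: "graded_vs s G \<Longrightarrow> G k \<subseteq> gcarrier s G"
  unfolding gcarrier_def by (rule order_trans[OF _ module.span_superset[OF graded_vs_module]]) auto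

lemma gcarrier_concentrated:
  assumes G: "graded_vs s G" and "concentrated G l"
  shows "gcarrier s G = G l"
proof -
  have "(\<Union>k. G k) = G l" using assms graded_vs_zero[OF G, of l] unfolding concentrated_def by auto
  then show ?thesis
    unfolding gcarrier_def using module.span_eq_iff[OF graded_vs_module[OF G]] graded_vs_subspace[OF G] by simp
qed

lemma subspace_degfilt: "graded_vs s G \<Longrightarrow> module.subspace s (degfilt s G l)"
  unfolding degfilt_def using module.subspace_span[OF graded_vs_module] .

lemma graded_vs_subset_degfilt: "graded_vs s G \<Longrightarrow> k \<le> l \<Longrightarrow> G k \<subseteq> degfilt s G l"
  unfolding degfilt_def by (rule order_trans[OF _ module.span_superset[OF graded_vs_module]]) auto

lemma degfilt_subset_gcarrier: "graded_vs s G \<Longrightarrow> degfilt s G l \<subseteq> gcarrier s G"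
  unfolding degfilt_def gcarrier_def by (rule module.span_mono[OF graded_vs_module]) auto

lemma lin_on_zero: "lin_on sA C sB f \<Longrightarrow> 0 \<in> C \<Longrightarrow> f 0 = 0"
  unfolding lin_on_def by (metis add_0 add_left_imp_eq add.right_neutral)

lemma lin_on_preimage_subspace:
  assumes mA: "module sA" and C: "module.subspace sA C" and f: "lin_on sA C sB f"
    and mB: "module sB" and D: "module.subspace sB D"
  shows "module.subspace sA {x\<in>C. f x \<in> D}"
proof (rule module.subspaceI[OF mA])
  show "0 \<in> {x \<in> C. f x \<in> D}"
    using lin_on_zero[OF f module.subspace_0[OF mA C]] module.subspace_0[OF mA C] module.subspace_0[OF mB D]
    by simp
  show "x + y \<in> {x \<in> C. f x \<in> D}" if "x \<in> {x \<in> C. f x \<in> D}" "y \<in> {x \<in> C. f x \<in> D}" for x y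
    using that f module.subspace_add[OF mA C] module.subspace_add[OF mB D] unfolding lin_on_def by auto
  show "sA c x \<in> {x \<in> C. f x \<in> D}" if "x \<in> {x \<in> C. f x \<in> D}" for c x
    using that f module.subspace_scale[OF mA C] module.subspace_scale[OF mB D] unfolding lin_on_def by auto
qed

lemma graded_vs_independent:
  assumes "graded_vs s G" and "finite F" and "\<forall>j. c j \<in> G j" and "\<forall>j. j \<notin> F \<longrightarrow> c j = 0"
    and "sum c F = 0"
  shows "c j = 0"
proof -
  have supp: "{j. c j \<noteq> 0} \<subseteq> F" using assms(4) by blast
  have "finite {j. c j \<noteq> 0}" by (rule finite_subset[OF supp assms(2)])
  moreover have "sum c {j. c j \<noteq> 0} = 0"
    using sum.mono_neutral_left[OF assms(2) supp, of c] assms(5) by simp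
  ultimately show ?thesis
    using assms(1,3) unfolding graded_vs_def by (blast dest: spec[of _ c])
qed

lemma degfilt_decomp:
  assumes G: "graded_vs s G" and y: "y \<in> degfilt s G l"
  obtains c F where "finite F" "F \<subseteq> {..l}" "\<forall>j. c j \<in> G j" "\<forall>j. j \<notin> F \<longrightarrow> c j = 0" "y = sum c F"
proof -
  have ms: "module s" by (rule graded_vs_module[OF G])
  let ?D = "{y. \<exists>c F. finite F \<and> F \<subseteq> {..l} \<and> (\<forall>j. c j \<in> G j) \<and> (\<forall>j. j \<notin> F \<longrightarrow> c j = 0) \<and> y = sum c F}"
  have "y \<in> ?D"
  proof (rule module.span_subspace_induct[OF ms y[unfolded degfilt_def]])
    show "module.subspace s ?D"
    proof (rule module.subspaceI[OF ms])
      show "0 \<in> ?D" using graded_vs_zero[OF G] by (intro CollectI exI[of _ "\<lambda>_. 0"] exI[of _ "{}"]) simp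
    next
      fix x y assume "x \<in> ?D" "y \<in> ?D"
      then obtain c F d H where
        c: "finite F" "F \<subseteq> {..l}" "\<forall>j. c j \<in> G j" "\<forall>j. j \<notin> F \<longrightarrow> c j = 0" "x = sum c F" and
        d: "finite H" "H \<subseteq> {..l}" "\<forall>j. d j \<in> G j" "\<forall>j. j \<notin> H \<longrightarrow> d j = 0" "y = sum d H"
        by blast
      have "sum c F = sum c (F \<union> H)" "sum d H = sum d (F \<union> H)"
        using c d by (auto intro: sum.mono_neutral_left)
      then have "x + y = sum (\<lambda>j. c j + d j) (F \<union> H)" using c d by (simp add: sum.distrib)
      moreover have "\<forall>j. c j + d j \<in> G j" using c d module.subspace_add[OF ms graded_vs_subspace[OF G]] by blast
      ultimately show "x + y \<in> ?D" using c d by (intro CollectI exI[of _ "\<lambda>j. c j + d j"] exI[of _ "F \<union> H"]) auto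
    next
      fix a x assume "x \<in> ?D"
      then obtain c F where c: "finite F" "F \<subseteq> {..l}" "\<forall>j. c j \<in> G j" "\<forall>j. j \<notin> F \<longrightarrow> c j = 0" "x = sum c F"
        by blast
      have "s a x = sum (\<lambda>j. s a (c j)) F" using c module.scale_sum_right[OF ms] by simp
      moreover have "\<forall>j. s a (c j) \<in> G j" using c module.subspace_scale[OF ms graded_vs_subspace[OF G]] by blast
      ultimately show "s a x \<in> ?D" using c module.scale_zero_right[OF ms]
        by (intro CollectI exI[of _ "\<lambda>j. s a (c j)"] exI[of _ F]) auto
    qed
  next
    fix x assume "x \<in> (\<Union>k\<in>{..l}. G k)"
    then obtain k where "k \<le> l" "x \<in> G k" by auto
    then show "x \<in> ?D"
      using graded_vs_zero[OF G] by (intro CollectI exI[of _ "(\<lambda>_. 0)(k := x)"] exI[of _ "{k}"]) auto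
  qed
  then show ?thesis by (elim CollectE exE conjE) (rule that)
qed

lemma degfilt_inter_above:
  assumes G: "graded_vs s G" and x: "x \<in> G k" "x \<in> degfilt s G l" and "l < k"
  shows "x = 0"
proof -
  obtain c F where c: "finite F" "F \<subseteq> {..l}" "\<forall>j. c j \<in> G j" "\<forall>j. j \<notin> F \<longrightarrow> c j = 0" "x = sum c F"
    using degfilt_decomp[OF G x(2)] .
  have k: "k \<notin> F" using c(2) \<open>l < k\<close> by auto
  \<comment> \<open>Adding \<open>-x\<close> in degree k to the decomposition of x gives a vanishing homogeneous sum.\<close>
  define c' where "c' = c(k := - x)"
  have "sum c' F = sum c F" by (rule sum.cong) (use k in \<open>auto simp: c'_def\<close>)
  then have "sum c' (insert k F) = 0" using c(1,5) k by (simp add: c'_def)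
  moreover have "\<forall>j. c' j \<in> G j"
    using c(3) x(1) module.subspace_neg[OF graded_vs_module[OF G] graded_vs_subspace[OF G]] by (simp add: c'_def)
  moreover have "\<forall>j. j \<notin> insert k F \<longrightarrow> c' j = 0" using c(4) by (simp add: c'_def)
  ultimately have "c' k = 0" using graded_vs_independent[OF G] c(1) by blast
  then show "x = 0" by (simp add: c'_def)
qed

lemma hom_list_subset: "hom_list G ks xs \<Longrightarrow> (\<And>k. G k \<subseteq> C) \<Longrightarrow> set xs \<subseteq> C"
  unfolding hom_list_def by (auto simp: in_set_conv_nth) blast

lemma hom_list_snoc: "hom_list G ks xs \<Longrightarrow> x \<in> G k \<Longrightarrow> hom_list G (ks @ [k]) (xs @ [x])"
  unfolding hom_list_def by (auto simp: nth_append)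

lemma hom_list_nonpos_degrees:
  assumes "hom_list G ks xs" and "\<forall>k>0. G k = {0}" and "0 \<in> G 0"
  obtains ks' where "hom_list G ks' xs" and "\<forall>k\<in>set ks'. k \<le> 0"
proof
  have "x \<in> G (min 0 k)" if "x \<in> G k" for x k
    using that assms(2,3) by (cases "0 < k") (auto simp: min_def)
  then show "hom_list G (map (min 0) ks) xs"
    using assms(1) unfolding hom_list_def by auto
qed auto

lemma hom_list_degree_sum_singleton:
  assumes "hom_list G ks xs" and "\<forall>k\<in>set ks. k \<le> (0::int)" and "int (length xs) = sum_list ks + 1"
  shows "\<exists>x\<in>G 0. xs = [x]"
proof (cases xs)
  case Nil
  then show ?thesis using assms(1,3) by (simp add: hom_list_def)
next
  case (Cons x xs')
  then obtain k ks'' where ks: "ks = k # ks''" using assms(1) by (cases ks) (auto simp: hom_list_def)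
  have "sum_list ks'' \<le> 0" using assms(2) ks by (auto intro: sum_list_nonpos)
  moreover have "k \<le> 0" using assms(2) ks by simp
  ultimately have "int (length xs') = 0 \<and> k = 0" using assms(3) Cons ks by simp
  then have "xs' = [] \<and> k = 0" by simp
  then show ?thesis using assms(1) Cons ks by (auto simp: hom_list_def)
qed

lemma multilin_extend_from_homogeneous:
  assumes G: "graded_vs sA G" and f: "multilin sA (gcarrier sA G) sB f"
    and mB: "module sB" and D: "module.subspace sB D"
    and hom: "\<And>ks xs. hom_list G ks xs \<Longrightarrow> f xs \<in> D"
    and xs: "set xs \<subseteq> gcarrier sA G"
  shows "f xs \<in> D"
proof -
  have mA: "module sA" by (rule graded_vs_module[OF G])
  \<comment> \<open>Make the slots homogeneous one at a time, from left to right.\<close>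
  have "hom_list G ks ys \<Longrightarrow> f (ys @ ws) \<in> D" if "set ws \<subseteq> gcarrier sA G" for ks ys ws
    using that
  proof (induction ws arbitrary: ks ys)
    case Nil
    then show ?case using hom by simp
  next
    case (Cons w ws)
    have ysC: "set ys \<subseteq> gcarrier sA G" by (rule hom_list_subset[OF Cons.prems(1) graded_vs_subset_gcarrier[OF G]])
    have lin: "lin_on sA (gcarrier sA G) sB (\<lambda>x. f (ys @ x # ws))"
      using f ysC Cons.prems(2) unfolding multilin_def by simp
    have "w \<in> {x \<in> gcarrier sA G. f (ys @ x # ws) \<in> D}"
    proof (rule module.span_subspace_induct[OF mA])
      show "w \<in> module.span sA (\<Union>k. G k)" using Cons.prems(2) by (simp add: gcarrier_def)
      show "module.subspace sA {x \<in> gcarrier sA G. f (ys @ x # ws) \<in> D}"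
        by (rule lin_on_preimage_subspace[OF mA subspace_gcarrier[OF G] lin mB D])
    next
      fix x assume "x \<in> (\<Union>k. G k)"
      then obtain k where x: "x \<in> G k" by auto
      have "f ((ys @ [x]) @ ws) \<in> D"
        using Cons.IH[OF hom_list_snoc[OF Cons.prems(1) x]] Cons.prems(2) by simp
      then show "x \<in> {x \<in> gcarrier sA G. f (ys @ x # ws) \<in> D}"
        using x graded_vs_subset_gcarrier[OF G] by auto
    qed
    then show ?case by simp
  qed
  from this[where ks="[]" and ys="[]" and ws=xs] xs show ?thesis by (simp add: hom_list_def)
qed

lemma ainf_mod_graded_alg: "ainf_mod sA GA mu sP GP m \<Longrightarrow> graded_vs sA GA"
  and ainf_mod_graded: "ainf_mod sA GA mu sP GP m \<Longrightarrow> graded_vs sP GP"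
  and ainf_mod_lin: "ainf_mod sA GA mu sP GP m \<Longrightarrow> set as \<subseteq> gcarrier sA GA \<Longrightarrow>
      lin_on sP (gcarrier sP GP) sP (\<lambda>p. m p as)"
  and ainf_mod_multilin: "ainf_mod sA GA mu sP GP m \<Longrightarrow> p \<in> gcarrier sP GP \<Longrightarrow>
      multilin sA (gcarrier sA GA) sP (m p)"
  and ainf_mod_degree: "ainf_mod sA GA mu sP GP m \<Longrightarrow> p \<in> GP k \<Longrightarrow> hom_list GA ks as \<Longrightarrow>
      m p as \<in> GP (k + sum_list ks + 1 - int (length as))"
  unfolding ainf_mod_def ainf_alg_def by blast+

lemma ainf_mod_zero:
  assumes P: "ainf_mod sA GA mu sP GP m" and "set as \<subseteq> gcarrier sA GA"
  shows "m 0 as = 0"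
  using lin_on_zero[OF ainf_mod_lin[OF assms]] graded_vs_zero[OF ainf_mod_graded[OF P]]
    graded_vs_subset_gcarrier[OF ainf_mod_graded[OF P]] by blast

lemma ainf_mod_degree_nonpos:
  assumes P: "ainf_mod sA GA mu sP GP m" and A: "\<forall>k>0. GA k = {0}"
    and p: "p \<in> GP k" and as: "hom_list GA ks as"
  obtains ks' where "hom_list GA ks' as" "\<forall>k\<in>set ks'. k \<le> 0"
    "m p as \<in> GP (k + sum_list ks' + 1 - int (length as))"
proof -
  obtain ks' where "hom_list GA ks' as" "\<forall>k\<in>set ks'. k \<le> 0"
    using hom_list_nonpos_degrees[OF as A graded_vs_zero[OF ainf_mod_graded_alg[OF P]]] .
  then show ?thesis using that ainf_mod_degree[OF P p] by blast
qed

lemma ainf_mod_homogeneous_in_degfilt: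
  assumes P: "ainf_mod sA GA mu sP GP m" and Pmin: "minimal_mod sP GP m" and A: "\<forall>k>0. GA k = {0}"
    and p: "p \<in> GP k" and "k \<le> l" and as: "hom_list GA ks as"
  shows "m p as \<in> degfilt sP GP l"
proof (cases "as = []")
  case True
  have GP: "graded_vs sP GP" by (rule ainf_mod_graded[OF P])
  have "m p as = 0" using Pmin p graded_vs_subset_gcarrier[OF GP] True by (auto simp: minimal_mod_def)
  then show ?thesis using module.subspace_0[OF graded_vs_module[OF GP] subspace_degfilt[OF GP]] by simp
next
  case False
  obtain ks' where "\<forall>k\<in>set ks'. k \<le> 0" and deg: "m p as \<in> GP (k + sum_list ks' + 1 - int (length as))"
    using ainf_mod_degree_nonpos[OF P A p as] .
  then have "sum_list ks' \<le> 0" by (auto intro: sum_list_nonpos)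
  then have "k + sum_list ks' + 1 - int (length as) \<le> l" using False \<open>k \<le> l\<close> by (cases as) auto
  then show ?thesis using deg graded_vs_subset_degfilt[OF ainf_mod_graded[OF P]] by blast
qed

lemma degfilt_closed:
  assumes P: "ainf_mod sA GA mu sP GP m" and Pmin: "minimal_mod sP GP m" and A: "\<forall>k>0. GA k = {0}"
    and p: "p \<in> degfilt sP GP l" and as: "set as \<subseteq> gcarrier sA GA"
  shows "m p as \<in> degfilt sP GP l"
proof -
  have GA: "graded_vs sA GA" and GP: "graded_vs sP GP"
    using ainf_mod_graded_alg[OF P] ainf_mod_graded[OF P] .
  have mP: "module sP" by (rule graded_vs_module[OF GP])
  have "p \<in> {x \<in> gcarrier sP GP. m x as \<in> degfilt sP GP l}"
  proof (rule module.span_subspace_induct[OF mP p[unfolded degfilt_def]])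
    show "module.subspace sP {x \<in> gcarrier sP GP. m x as \<in> degfilt sP GP l}"
      by (rule lin_on_preimage_subspace[OF mP subspace_gcarrier[OF GP] ainf_mod_lin[OF P as] mP
            subspace_degfilt[OF GP]])
  next
    fix x assume "x \<in> (\<Union>k\<in>{..l}. GP k)"
    then obtain k where k: "k \<le> l" "x \<in> GP k" by auto
    then have x: "x \<in> gcarrier sP GP" using graded_vs_subset_gcarrier[OF GP] by blast
    have "m x as \<in> degfilt sP GP l"
      by (rule multilin_extend_from_homogeneous[OF GA ainf_mod_multilin[OF P x] mP subspace_degfilt[OF GP]
            ainf_mod_homogeneous_in_degfilt[OF P Pmin A k(2) k(1)] as])
    then show "x \<in> {x \<in> gcarrier sP GP. m x as \<in> degfilt sP GP l}" using x by blast
  qed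
  then show ?thesis by blast
qed

lemma degfilt_ainf_submod:
  assumes P: "ainf_mod sA GA mu sP GP m" and Pmin: "minimal_mod sP GP m" and A: "\<forall>k>0. GA k = {0}"
  shows "ainf_submod sA GA sP GP m (degfilt sP GP l)"
proof -
  have GP: "graded_vs sP GP" by (rule ainf_mod_graded[OF P])
  have mP: "module sP" by (rule graded_vs_module[OF GP])
  have "degfilt sP GP l = module.span sP (\<Union>k. degfilt sP GP l \<inter> GP k)"
  proof
    show "degfilt sP GP l \<subseteq> module.span sP (\<Union>k. degfilt sP GP l \<inter> GP k)"
      unfolding degfilt_def
      by (rule module.span_mono[OF mP]) (use graded_vs_subset_degfilt[OF GP] in \<open>auto simp: degfilt_def\<close>)
    show "module.span sP (\<Union>k. degfilt sP GP l \<inter> GP k) \<subseteq> degfilt sP GP l"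
      by (rule module.span_minimal[OF mP _ subspace_degfilt[OF GP]]) auto
  qed
  then show ?thesis
    unfolding ainf_submod_def
    using degfilt_subset_gcarrier[OF GP] subspace_degfilt[OF GP] degfilt_closed[OF P Pmin A] by blast
qed

lemma subquotient_concentrated:
  assumes GP: "graded_vs sP GP" and sq: "is_subquotient sA GA sP GP m l sQ GQ mQ pi"
  shows "concentrated GQ l"
  unfolding concentrated_def
proof (intro allI impI)
  fix k assume "k \<noteq> l"
  have mP: "module sP" by (rule graded_vs_module[OF GP])
  have ker: "\<And>x. x \<in> degfilt sP GP l \<Longrightarrow> pi x = 0 \<longleftrightarrow> x \<in> degfilt sP GP (l - 1)"
    and img: "pi ` (GP k \<inter> degfilt sP GP l) = GQ k"
    using sq unfolding is_subquotient_def by blast+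
  have zero: "0 \<in> GP k \<inter> degfilt sP GP l"
    using graded_vs_zero[OF GP] module.subspace_0[OF mP subspace_degfilt[OF GP]] by blast
  have "pi x = 0" if "x \<in> GP k \<inter> degfilt sP GP l" for x
  proof (cases "k < l")
    case True
    then show ?thesis using that ker graded_vs_subset_degfilt[OF GP, of k "l - 1"] by auto
  next
    case False
    then have "x = 0" using that \<open>k \<noteq> l\<close> degfilt_inter_above[OF GP] by auto
    then show ?thesis using ker zero module.subspace_0[OF mP subspace_degfilt[OF GP]] by auto
  qed
  then have "pi ` (GP k \<inter> degfilt sP GP l) = {0}" using zero by force
  then show "GQ k = {0}" using img by simp
qed

lemma concentrated_ainf_mod_ops_vanish:
  assumes Q: "ainf_mod sA GA mu sQ GQ mQ" and cQ: "concentrated GQ l" and A: "\<forall>k>0. GA k = {0}"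
    and p: "p \<in> GQ k" and as: "hom_list GA ks as" and not_unary: "\<not> (\<exists>a\<in>GA 0. as = [a])"
  shows "mQ p as = 0"
proof -
  have zero: "x = 0" if "x \<in> GQ j" "j \<noteq> l" for x j using that cQ by (auto simp: concentrated_def)
  have asC: "set as \<subseteq> gcarrier sA GA"
    by (rule hom_list_subset[OF as graded_vs_subset_gcarrier[OF ainf_mod_graded_alg[OF Q]]])
  show ?thesis
  proof (cases "k = l")
    case False
    then show ?thesis using zero[OF p] ainf_mod_zero[OF Q asC] by simp
  next
    case True
    obtain ks' where ks': "hom_list GA ks' as" "\<forall>k\<in>set ks'. k \<le> 0"
      and deg: "mQ p as \<in> GQ (k + sum_list ks' + 1 - int (length as))"
      using ainf_mod_degree_nonpos[OF Q A p as] .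
    have "k + sum_list ks' + 1 - int (length as) \<noteq> l"
      using hom_list_degree_sum_singleton[OF ks'] not_unary True by auto
    then show ?thesis using zero[OF deg] by simp
  qed
qed

lemma concentrated_intertwine:
  assumes Q: "ainf_mod sA GA mu sQ GQ mQ" and cQ: "concentrated GQ l"
    and R: "ainf_mod sA GA mu sR GR mR" and cR: "concentrated GR l" and A: "\<forall>k>0. GA k = {0}"
    and phi: "lin_on sQ (GQ l) sR phi" "phi ` GQ l \<subseteq> GR l"
    and unary: "\<forall>q\<in>GQ l. \<forall>a\<in>GA 0. phi (mQ q [a]) = mR (phi q) [a]"
    and p: "p \<in> GQ k" and as: "hom_list GA ks as"
  shows "mR (phi p) as = phi (mQ p as)"
proof -
  have phi0: "phi 0 = 0" by (rule lin_on_zero[OF phi(1) graded_vs_zero[OF ainf_mod_graded[OF Q]]])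
  consider "k \<noteq> l" | "k = l" "\<exists>a\<in>GA 0. as = [a]" | "k = l" "\<not> (\<exists>a\<in>GA 0. as = [a])" by blast
  then show ?thesis
  proof cases
    case 1
    have asC: "set as \<subseteq> gcarrier sA GA"
      by (rule hom_list_subset[OF as graded_vs_subset_gcarrier[OF ainf_mod_graded_alg[OF Q]]])
    have "p = 0" using p 1 cQ by (auto simp: concentrated_def)
    then show ?thesis using ainf_mod_zero[OF Q asC] ainf_mod_zero[OF R asC] phi0 by simp
  next
    case 2
    then show ?thesis using unary p by auto
  next
    case 3
    have "phi p \<in> GR l" using phi(2) p 3(1) by blast
    then show ?thesis
      using concentrated_ainf_mod_ops_vanish[OF Q cQ A p as 3(2)]
        concentrated_ainf_mod_ops_vanish[OF R cR A _ as 3(2)] phi0 by simp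
  qed
qed

definition strict_morph :: "('p \<Rightarrow> 'q::zero) \<Rightarrow> 'p \<Rightarrow> 'a list \<Rightarrow> 'q" where
  "strict_morph phi p as = (if as = [] then phi p else 0)"

lemma strict_morph_ainf_morph:
  assumes Q: "ainf_mod sA GA mu sQ GQ mQ" and R: "ainf_mod sA GA mu sR GR mR"
    and lin: "lin_on sQ (gcarrier sQ GQ) sR phi" and deg: "\<And>k. phi ` GQ k \<subseteq> GR k"
    and comm: "\<And>k p ks as. p \<in> GQ k \<Longrightarrow> hom_list GA ks as \<Longrightarrow> mR (phi p) as = phi (mQ p as)"
  shows "ainf_morph sA GA mu sQ GQ mQ sR GR mR (strict_morph phi)"
  unfolding ainf_morph_def
proof (intro conjI allI impI ballI)
  have GA: "graded_vs sA GA" and GR: "graded_vs sR GR"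
    using ainf_mod_graded_alg[OF Q] ainf_mod_graded[OF R] .
  have scale0: "\<And>c. sR c 0 = 0" using module.scale_zero_right[OF graded_vs_module[OF GR]] .
  show "lin_on sQ (gcarrier sQ GQ) sR (\<lambda>p. strict_morph phi p as)" for as
    using lin scale0 unfolding strict_morph_def lin_on_def by auto
  show "multilin sA (gcarrier sA GA) sR (strict_morph phi p)" for p
    using scale0 unfolding strict_morph_def multilin_def lin_on_def by auto
  fix k p ks as assume p: "p \<in> GQ k" and as: "hom_list GA ks as"
  show "strict_morph phi p as \<in> GR (k + sum_list ks - int (length as))"
    using deg p as graded_vs_zero[OF GR] by (auto simp: strict_morph_def hom_list_def image_subset_iff)
  have asC: "set as \<subseteq> gcarrier sA GA" by (rule hom_list_subset[OF as graded_vs_subset_gcarrier[OF GA]])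
  have "(\<Sum>i\<le>length as. mR (strict_morph phi p (take i as)) (drop i as)) =
      (\<Sum>i\<le>length as. if i = 0 then mR (phi p) as else 0)"
    by (rule sum.cong)
      (use ainf_mod_zero[OF R order_trans[OF set_drop_subset asC]] in \<open>auto simp: strict_morph_def\<close>)
  then have lhs: "(\<Sum>i\<le>length as. mR (strict_morph phi p (take i as)) (drop i as)) = phi (mQ p as)"
    using comm[OF p as] by simp
  have "(\<Sum>i\<le>length as. strict_morph phi (mQ p (take i as)) (drop i as)) =
      (\<Sum>i\<le>length as. if i = length as then phi (mQ p as) else 0)"
    by (rule sum.cong) (auto simp: strict_morph_def)
  then have rhs: "(\<Sum>i\<le>length as. strict_morph phi (mQ p (take i as)) (drop i as)) = phi (mQ p as)"
    by simp
  have "(\<Sum>(i, j)\<in>splits (length as). sR (ksign ((k - 1) + shsum (take i ks)))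
      (strict_morph phi p (take i as @ mu (take j (drop i as)) # drop (i + j) as))) = 0"
    by (rule sum.neutral) (auto simp: strict_morph_def scale0)
  then show "(\<Sum>i\<le>length as. mR (strict_morph phi p (take i as)) (drop i as)) =
      (\<Sum>i\<le>length as. strict_morph phi (mQ p (take i as)) (drop i as)) +
      (\<Sum>(i, j)\<in>splits (length as). sR (ksign ((k - 1) + shsum (take i ks)))
        (strict_morph phi p (take i as @ mu (take j (drop i as)) # drop (i + j) as)))"
    unfolding lhs rhs by simp
qed

lemma strict_morph_quasi_iso:
  assumes GQ: "graded_vs sQ GQ" and GR: "graded_vs sR GR"
    and Qmin: "minimal_mod sQ GQ mQ" and Rmin: "minimal_mod sR GR mR"
    and bij: "\<And>k. bij_betw phi (GQ k) (GR k)" and phi0: "phi 0 = 0"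
  shows "quasi_iso GQ mQ GR mR (strict_morph phi)"
proof -
  have mQ0: "mQ p [] = 0" if "p \<in> GQ k" for p k
    using Qmin subsetD[OF graded_vs_subset_gcarrier[OF GQ] that] by (simp add: minimal_mod_def)
  have mR0: "mR q [] = 0" if "q \<in> GR k" for q k
    using Rmin subsetD[OF graded_vs_subset_gcarrier[OF GR] that] by (simp add: minimal_mod_def)
  show ?thesis
    unfolding quasi_iso_def
  proof (intro conjI allI ballI impI)
    fix k p assume p: "p \<in> GQ k" and "\<exists>q\<in>GR (k - 1). strict_morph phi p [] = mR q []"
    then obtain q where "q \<in> GR (k - 1)" "phi p = mR q []" by (auto simp: strict_morph_def)
    then have "phi p = phi 0" using mR0 phi0 by simp
    then have "p = 0" using inj_onD[OF bij_betw_imp_inj_on[OF bij[of k]] _ p graded_vs_zero[OF GQ]] by simp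
    then show "\<exists>p'\<in>GQ (k - 1). p = mQ p' []"
      by (intro bexI[of _ 0]) (simp_all add: mQ0 graded_vs_zero[OF GQ])
  next
    fix k q assume "q \<in> GR k"
    then obtain p where p: "p \<in> GQ k" "q = phi p" using bij[of k] by (auto simp: bij_betw_def)
    have "q = strict_morph phi p [] + mR 0 []" using p mR0[OF graded_vs_zero[OF GR]] by (simp add: strict_morph_def)
    then show "\<exists>p\<in>GQ k. mQ p [] = 0 \<and> (\<exists>q'\<in>GR (k - 1). q = strict_morph phi p [] + mR q' [])"
      using p(1) mQ0[OF p(1)] graded_vs_zero[OF GR] by (intro bexI[of _ p] conjI bexI[of _ 0]) simp_all
  qed
qed

lemma concentrated_ainf_equivalent:
  assumes Q: "ainf_mod sA GA mu sQ GQ mQ" and cQ: "concentrated GQ l"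
    and R: "ainf_mod sA GA mu sR GR mR" and Rmin: "minimal_mod sR GR mR" and cR: "concentrated GR l"
    and A: "\<forall>k>0. GA k = {0}"
    and lin: "lin_on sQ (GQ l) sR phi" and bij: "bij_betw phi (GQ l) (GR l)"
    and unary: "\<forall>q\<in>GQ l. \<forall>a\<in>GA 0. phi (mQ q [a]) = mR (phi q) [a]"
  shows "ainf_equivalent sA GA mu sQ GQ mQ sR GR mR"
proof -
  have GQ: "graded_vs sQ GQ" and GR: "graded_vs sR GR" using ainf_mod_graded[OF Q] ainf_mod_graded[OF R] .
  have phi0: "phi 0 = 0" by (rule lin_on_zero[OF lin graded_vs_zero[OF GQ]])
  have bij_all: "bij_betw phi (GQ k) (GR k)" for k
  proof (cases "k = l")
    case False
    then have "GQ k = {0}" "GR k = {0}" using cQ cR by (auto simp: concentrated_def)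
    then show ?thesis using phi0 by (simp add: bij_betw_def)
  qed (use bij in simp)
  have Qmin: "minimal_mod sQ GQ mQ"
    unfolding minimal_mod_def gcarrier_concentrated[OF GQ cQ]
    using concentrated_ainf_mod_ops_vanish[OF Q cQ A, of _ l "[]" "[]"] by (simp add: hom_list_def)
  have "ainf_morph sA GA mu sQ GQ mQ sR GR mR (strict_morph phi)"
  proof (rule strict_morph_ainf_morph[OF Q R])
    show "lin_on sQ (gcarrier sQ GQ) sR phi" using lin gcarrier_concentrated[OF GQ cQ] by simp
    show "phi ` GQ k \<subseteq> GR k" for k using bij_betw_imp_surj_on[OF bij_all] by simp
    show "mR (phi p) as = phi (mQ p as)" if "p \<in> GQ k" "hom_list GA ks as" for k p ks as
      by (rule concentrated_intertwine[OF Q cQ R cR A lin _ unary that])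
        (use bij_betw_imp_surj_on[OF bij] in simp)
  qed
  moreover have "quasi_iso GQ mQ GR mR (strict_morph phi)"
    by (rule strict_morph_quasi_iso[OF GQ GR Qmin Rmin bij_all phi0])
  ultimately show ?thesis unfolding ainf_equivalent_def by blast
qed

theorem lemma4p5:
  fixes sA :: "'k::field \<Rightarrow> 'a::ab_group_add \<Rightarrow> 'a" and GA :: "int \<Rightarrow> 'a set" and mu :: "'a list \<Rightarrow> 'a"
    and sP :: "'k \<Rightarrow> 'p::ab_group_add \<Rightarrow> 'p" and GP :: "int \<Rightarrow> 'p set" and m :: "'p \<Rightarrow> 'a list \<Rightarrow> 'p"
  assumes A: "ainf_alg sA GA mu" and Amin: "minimal_alg sA GA mu"
    and Anonpos: "\<forall>k>0. GA k = {0}"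
    and P: "ainf_mod sA GA mu sP GP m" and Pmin: "minimal_mod sP GP m"
  shows "\<forall>l. ainf_submod sA GA sP GP m (degfilt sP GP l) \<and>
    (\<forall>(sQ :: 'k \<Rightarrow> 'q::ab_group_add \<Rightarrow> 'q) GQ mQ pi.
       ainf_mod sA GA mu sQ GQ mQ \<and> is_subquotient sA GA sP GP m l sQ GQ mQ pi \<longrightarrow>
       concentrated GQ l \<and>
       (\<forall>(sR :: 'k \<Rightarrow> 'r::ab_group_add \<Rightarrow> 'r) GR mR phi.
          ainf_mod sA GA mu sR GR mR \<and> minimal_mod sR GR mR \<and> concentrated GR l \<and>
          lin_on sQ (GQ l) sR phi \<and> bij_betw phi (GQ l) (GR l) \<and>
          (\<forall>q\<in>GQ l. \<forall>a\<in>GA 0. phi (mQ q [a]) = mR (phi q) [a]) \<longrightarrow>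
          ainf_equivalent sA GA mu sQ GQ mQ sR GR mR))"
  \<comment> \<open>A is an A-infinity algebra as part of P.\<close>
proof (intro allI conjI impI)
  fix l
  show "ainf_submod sA GA sP GP m (degfilt sP GP l)" by (rule degfilt_ainf_submod[OF P Pmin Anonpos])
  fix sQ :: "'k \<Rightarrow> 'q::ab_group_add \<Rightarrow> 'q" and GQ mQ pi
  assume Q: "ainf_mod sA GA mu sQ GQ mQ \<and> is_subquotient sA GA sP GP m l sQ GQ mQ pi"
  then show cQ: "concentrated GQ l" using subquotient_concentrated[OF ainf_mod_graded[OF P]] by blast
  fix sR :: "'k \<Rightarrow> 'r::ab_group_add \<Rightarrow> 'r" and GR mR phi
  assume "ainf_mod sA GA mu sR GR mR \<and> minimal_mod sR GR mR \<and> concentrated GR l \<and>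
    lin_on sQ (GQ l) sR phi \<and> bij_betw phi (GQ l) (GR l) \<and>
    (\<forall>q\<in>GQ l. \<forall>a\<in>GA 0. phi (mQ q [a]) = mR (phi q) [a])"
  then show "ainf_equivalent sA GA mu sQ GQ mQ sR GR mR"
    using concentrated_ainf_equivalent[OF _ cQ _ _ _ Anonpos] Q by blast
qed

end
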